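(* Let $p=k/n$ for a fixed constant $k>0$. Then the average complexity $\mathbb{T}(n,p)$ of exhaustive search for maximum independent set on $G\sim\mathcal{G}(n,p)$ is exponential in $n$.
   Context: $\mathcal{G}(n,p)$ is the binomial random graph on $n$ vertices in which each of the $\binom{n}{2}$ pairs of vertices is an edge with probability $p$, independently. Exhaustive search processes the vertices in a fixed order $v_1,\dots,v_n$ and builds a binary search tree: a node at level $i$ corresponds to a subset $P\subseteq\{v_1,\dots,v_i\}$, and it has the two children $P\cup\{v_{i+1}\}$ and $P$ at level $i+1$; a node is kept (and expanded) only if its subset is an independent set of $G$. $\mathbb{T}(n,p)$ denotes the expected number of nodes of this search tree when $G\sim\mathcal{G}(n,p)$. *)

theory Defs
  imports "HOL-Probability.Probability"
begin

text \<open>Vertices of G(n,p) are 0,...,n-1, processed in this order (v_{i+1} = i).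
  A graph is represented by its edge indicator on unordered pairs, encoded as
  pairs (a,b) with a < b < n.\<close>

definition vertex_pairs :: "nat \<Rightarrow> (nat \<times> nat) set" where
  "vertex_pairs n = {(a, b). a < b \<and> b < n}"

definition random_graph :: "nat \<Rightarrow> real \<Rightarrow> (nat \<times> nat \<Rightarrow> bool) pmf" where
  "random_graph n p = Pi_pmf (vertex_pairs n) False (\<lambda>_. bernoulli_pmf p)"

definition independent_set :: "(nat \<times> nat \<Rightarrow> bool) \<Rightarrow> nat set \<Rightarrow> bool" where
  "independent_set G P \<longleftrightarrow> (\<forall>a\<in>P. \<forall>b\<in>P. a < b \<longrightarrow> \<not> G (a, b))"

text \<open>Nodes of the exhaustive search tree: a node at level i (0 \<le> i \<le> n) is a subset
  P of {v_1,...,v_i} = {0..<i} that is independent in G.\<close>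
definition search_tree_nodes :: "nat \<Rightarrow> (nat \<times> nat \<Rightarrow> bool) \<Rightarrow> (nat \<times> nat set) set" where
  "search_tree_nodes n G = {(i, P). i \<le> n \<and> P \<subseteq> {..<i} \<and> independent_set G P}"

definition avg_complexity :: "nat \<Rightarrow> real \<Rightarrow> real" ("\<T>") where
  "\<T> n p = measure_pmf.expectation (random_graph n p) (\<lambda>G. real (card (search_tree_nodes n G)))"

end

theory Submission
  imports Defs
begin

text \<open>If the first \<open>m\<close> vertices span no edge, then all \<open>2^m\<close> subsets of them are nodes
  at the last level of the search tree; this happens with probability \<open>(1 - p)^(m choose 2)\<close>.
  Hence \<open>\<T> n p \<ge> 2^m (1 - p)^(m^2) \<ge> 2^m exp (-2 p m^2)\<close>, and for \<open>p = k/n\<close> and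
  \<open>m = \<lfloor>\<epsilon> n\<rfloor>\<close> with \<open>\<epsilon>\<close> small compared to \<open>1/k\<close> the exponent \<open>2 k m^2 / n\<close> is only a
  fraction of \<open>m ln 2\<close>.\<close>

lemma finite_vertex_pairs: "finite (vertex_pairs n)"
  by (rule finite_subset[of _ "{..<n} \<times> {..<n}"]) (auto simp: vertex_pairs_def)

lemma vertex_pairs_mono: "m \<le> n \<Longrightarrow> vertex_pairs m \<subseteq> vertex_pairs n"
  by (auto simp: vertex_pairs_def)

lemma card_vertex_pairs_le: "card (vertex_pairs n) \<le> n * n"
proof -
  have "card (vertex_pairs n) \<le> card ({..<n} \<times> {..<n})"
    by (rule card_mono) (auto simp: vertex_pairs_def)
  then show ?thesis
    by (simp add: card_cartesian_product)
qed

lemma independent_set_lessThan_iff: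
  "independent_set G {..<m} \<longleftrightarrow> (\<forall>e\<in>vertex_pairs m. \<not> G e)"
  by (auto simp: independent_set_def vertex_pairs_def)

lemma prob_random_graph_no_edge_in:
  assumes "S \<subseteq> vertex_pairs n" "0 \<le> p" "p \<le> 1"
  shows "measure_pmf.prob (random_graph n p) {G. \<forall>e\<in>S. \<not> G e} = (1 - p) ^ card S"
proof -
  define B where "B e = (if e \<in> S then {False} else UNIV)" for e
  have "{G. \<forall>e\<in>S. \<not> G e} = Pi (vertex_pairs n) B"
    using assms(1) by (auto simp: B_def Pi_def)
  then have "measure_pmf.prob (random_graph n p) {G. \<forall>e\<in>S. \<not> G e}
      = (\<Prod>e\<in>vertex_pairs n. measure_pmf.prob (bernoulli_pmf p) (B e))"
    by (simp add: random_graph_def measure_Pi_pmf_Pi finite_vertex_pairs)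
  also have "\<dots> = (\<Prod>e\<in>vertex_pairs n. if e \<in> S then 1 - p else 1)"
    by (rule prod.cong) (auto simp: B_def measure_pmf_single assms(2,3))
  also have "\<dots> = (1 - p) ^ card S"
    using assms(1) by (simp add: prod.If_cases finite_vertex_pairs Int_absorb1)
  finally show ?thesis .
qed

lemma finite_search_tree_nodes: "finite (search_tree_nodes n G)"
  by (rule finite_subset[of _ "{..n} \<times> Pow {..<n}"]) (auto simp: search_tree_nodes_def)

lemma card_search_tree_nodes_ge:
  assumes "m \<le> n" "independent_set G {..<m}"
  shows "2 ^ m \<le> card (search_tree_nodes n G)"
proof -
  have "(\<lambda>P. (n, P)) ` Pow {..<m} \<subseteq> search_tree_nodes n G"
    using assms by (auto simp: search_tree_nodes_def independent_set_def)
  then have "card ((\<lambda>P. (n, P)) ` Pow {..<m}) \<le> card (search_tree_nodes n G)"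
    by (rule card_mono[OF finite_search_tree_nodes])
  moreover have "card ((\<lambda>P. (n, P)) ` Pow {..<m}) = 2 ^ m"
    by (simp add: card_image inj_on_def card_Pow)
  ultimately show ?thesis
    by simp
qed

lemma avg_complexity_ge_empty_prefix:
  assumes "m \<le> n" "0 \<le> p" "p \<le> 1"
  shows "2 ^ m * (1 - p) ^ card (vertex_pairs m) \<le> \<T> n p"
proof -
  let ?M = "measure_pmf (random_graph n p)"
  let ?X = "\<lambda>G. real (card (search_tree_nodes n G))"
  have "?X G \<le> real (card ({..n} \<times> Pow {..<n}))" for G
    unfolding of_nat_le_iff by (rule card_mono) (auto simp: search_tree_nodes_def)
  then have "integrable ?M ?X"
    by (intro measure_pmf.integrable_const_bound[where B = "real (card ({..n} \<times> Pow {..<n}))"])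
      auto
  then have Markov: "measure ?M {G. ?X G \<ge> 2 ^ m} \<le> \<T> n p / 2 ^ m"
    using integral_Markov_inequality_measure[of ?M ?X "space ?M" "2 ^ m"]
    by (simp add: avg_complexity_def)
  have "2 ^ m \<le> ?X G" if "independent_set G {..<m}" for G
    using card_search_tree_nodes_ge[OF assms(1) that]
    by (metis of_nat_le_iff of_nat_numeral of_nat_power)
  then have "measure ?M {G. independent_set G {..<m}} \<le> measure ?M {G. ?X G \<ge> 2 ^ m}"
    by (intro measure_pmf.finite_measure_mono) auto
  moreover have "measure ?M {G. independent_set G {..<m}} = (1 - p) ^ card (vertex_pairs m)"
    using prob_random_graph_no_edge_in[OF vertex_pairs_mono[OF assms(1)] assms(2,3)]
    by (simp add: independent_set_lessThan_iff)
  ultimately have "2 ^ m * (1 - p) ^ card (vertex_pairs m) \<le> 2 ^ m * measure ?M {G. ?X G \<ge> 2 ^ m}"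
    by simp
  also have "\<dots> \<le> \<T> n p"
    using Markov by (simp add: le_divide_eq mult.commute)
  finally show ?thesis .
qed

lemma exp_neg_two_mult_le_one_minus:
  assumes "0 \<le> (x::real)" "x \<le> 1/2"
  shows "exp (- 2 * x) \<le> 1 - x"
proof -
  have "- x - 2 * x\<^sup>2 \<le> ln (1 - x)"
    by (rule ln_one_minus_pos_lower_bound) (use assms in auto)
  moreover have "2 * x\<^sup>2 \<le> x"
    using assms mult_right_mono[of "2 * x" 1 x] by (simp add: power2_eq_square)
  ultimately have "- 2 * x \<le> ln (1 - x)"
    by linarith
  then have "exp (- 2 * x) \<le> exp (ln (1 - x))"
    by simp
  then show ?thesis
    using assms by simp
qed

lemma avg_complexity_sparse_ge:
  assumes "m \<le> n" "2 * k \<le> real n" "0 \<le> k"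
  shows "2 ^ m * exp (- 2 * k * m\<^sup>2 / n) \<le> \<T> n (k / n)"
proof -
  let ?p = "k / real n"
  have p: "0 \<le> ?p" "?p \<le> 1/2"
    by (cases "n = 0") (use assms in \<open>auto simp: divide_le_eq\<close>)
  have "- 2 * k * m\<^sup>2 / n = real (m * m) * (- 2 * ?p)"
    by (simp add: power2_eq_square)
  then have "exp (- 2 * k * m\<^sup>2 / n) = exp (- 2 * ?p) ^ (m * m)"
    by (simp only: exp_of_nat_mult)
  also have "\<dots> \<le> (1 - ?p) ^ (m * m)"
    using exp_neg_two_mult_le_one_minus[OF p] by (intro power_mono) auto
  also have "\<dots> \<le> (1 - ?p) ^ card (vertex_pairs m)"
    by (intro power_decreasing) (use p card_vertex_pairs_le[of m] in linarith)+
  finally have "2 ^ m * exp (- 2 * k * m\<^sup>2 / n) \<le> 2 ^ m * (1 - ?p) ^ card (vertex_pairs m)"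
    by (intro mult_left_mono) auto
  also have "\<dots> \<le> \<T> n ?p"
    by (rule avg_complexity_ge_empty_prefix[OF assms(1) p(1)]) (use p(2) in linarith)
  finally show ?thesis .
qed

lemma avg_complexity_sparse_ge_exp:
  assumes "0 < k" "0 < \<epsilon>" "\<epsilon> \<le> 1" "4 * k * \<epsilon> \<le> ln 2"
    and "2 * k \<le> real n" "2 \<le> \<epsilon> * n"
  shows "exp (\<epsilon> * ln 2 / 4) ^ n \<le> \<T> n (k / n)"
proof -
  define m where "m = nat \<lfloor>\<epsilon> * n\<rfloor>"
  have m: "\<epsilon> * n - 1 \<le> m" "m \<le> \<epsilon> * n"
    using assms(2) by (auto simp: m_def)
  then have "m \<le> n"
    using assms(3) mult_right_mono[of \<epsilon> 1 "real n"] by linarith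
  have "2 * k * m\<^sup>2 / n \<le> 2 * k * \<epsilon> * m"
    using m assms(1) mult_right_mono[of m "\<epsilon> * n" "2 * k * m"] assms(5)
    by (simp add: power2_eq_square divide_le_eq mult_ac)
  also have "\<dots> \<le> m * ln 2 / 2"
    using mult_right_mono[OF assms(4), of m] by (simp add: mult_ac)
  finally have "m * ln 2 / 2 \<le> m * ln 2 - 2 * k * m\<^sup>2 / n"
    by simp
  moreover have "\<epsilon> * n * ln 2 / 4 \<le> m * ln 2 / 2"
    using m assms(6) ln_gt_zero[of 2] mult_right_mono[of "\<epsilon> * n / 2" m "ln 2"] by simp
  ultimately have "\<epsilon> * n * ln 2 / 4 \<le> m * ln 2 - 2 * k * m\<^sup>2 / n"
    by linarith
  then have "exp (\<epsilon> * ln 2 / 4) ^ n \<le> exp (m * ln 2 - 2 * k * m\<^sup>2 / n)"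
    by (simp add: exp_of_nat_mult[symmetric] mult_ac)
  also have "\<dots> = exp (m * ln 2) * exp (- 2 * k * m\<^sup>2 / n)"
    by (simp flip: exp_add)
  also have "\<dots> = 2 ^ m * exp (- 2 * k * m\<^sup>2 / n)"
    by (simp add: exp_of_nat_mult)
  also have "\<dots> \<le> \<T> n (k / n)"
    using avg_complexity_sparse_ge[OF \<open>m \<le> n\<close> assms(5)] assms(1) by simp
  finally show ?thesis .
qed

theorem lemma3:
  fixes k :: real
  assumes "k > 0"
  shows "\<exists>c > 1. \<forall>\<^sub>F n in sequentially. \<T> n (k / real n) \<ge> c ^ n"
proof -
  define \<epsilon> where "\<epsilon> = min 1 (ln 2 / (4 * k))"
  have \<epsilon>: "0 < \<epsilon>" "\<epsilon> \<le> 1" "4 * k * \<epsilon> \<le> ln 2"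
    using assms by (auto simp: \<epsilon>_def min_mult_distrib_left field_simps)
  have "\<forall>\<^sub>F n in sequentially. max (2 * k) (2 / \<epsilon>) \<le> real n"
    using filterlim_real_sequentially unfolding filterlim_at_top by blast
  then have "\<forall>\<^sub>F n in sequentially. exp (\<epsilon> * ln 2 / 4) ^ n \<le> \<T> n (k / real n)"
    by eventually_elim
      (use avg_complexity_sparse_ge_exp[OF assms \<epsilon>] \<epsilon>(1) in \<open>simp add: field_simps\<close>)
  moreover have "exp (\<epsilon> * ln 2 / 4) > 1"
    using \<epsilon>(1) by simp
  ultimately show ?thesis
    by blast
qed

end
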